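(* Let $f,g\colon X\to Y$ be continuous maps, let $\pi\colon PY\to Y\times Y$, $\pi(\gamma)=(\gamma(0),\gamma(1))$, be the path fibration, and let $q\colon P\to X$ be the pull-back of $\pi$ along $(f,g)\colon X\to Y\times Y$; that is, $P=\{(x,\gamma)\in X\times PY:\gamma(0)=f(x),\ \gamma(1)=g(x)\}$ and $q(x,\gamma)=x$. Then $\mathrm{D}(f,g)=\mathrm{secat}(q)$.
   Context: $PY$ denotes the space of continuous paths $[0,1]\to Y$ with the compact-open topology. For continuous maps $f,g\colon X\to Y$, the homotopic distance $\mathrm{D}(f,g)$ is the least integer $n\geq 0$ such that there is an open cover $\{U_0,\dots,U_n\}$ of $X$ with $f|_{U_j}\simeq g|_{U_j}$ for all $j$ ($\infty$ if none exists). The Švarc genus (sectional category) $\mathrm{secat}(p)$ of a fibration $p\colon E\to B$ is the least integer $n\geq 0$ such that $B$ is covered by open sets $V_0,\dots,V_n$ over each of which $p$ admits a continuous local section. *)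

theory Defs
  imports "HOL-Analysis.Analysis" "HOL-Library.Extended_Nat"
begin

text \<open>Free path space PY: continuous paths [0,1] -> Y (extensional, i.e. undefined
  outside [0,1], so that paths are determined by their values on [0,1]), with the
  compact-open topology generated by the subbasic sets
  {gamma. gamma ` K \<subseteq> U}, K \<subseteq> [0,1] compact, U open in Y.\<close>
definition path_space :: "'a topology \<Rightarrow> (real \<Rightarrow> 'a) topology" where
  "path_space Y = topology_generated_by
     {{\<gamma>. pathin Y \<gamma> \<and> \<gamma> \<in> extensional {0..1} \<and> \<gamma> ` K \<subseteq> U} | K U.
        compact K \<and> K \<subseteq> {0..1} \<and> openin Y U}"

definition homotopic_distance ::
  "'a topology \<Rightarrow> 'b topology \<Rightarrow> ('a \<Rightarrow> 'b) \<Rightarrow> ('a \<Rightarrow> 'b) \<Rightarrow> enat" where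
  "homotopic_distance X Y f g =
     (INF n \<in> {n::nat. \<exists>U::nat \<Rightarrow> 'a set.
          (\<forall>j\<le>n. openin X (U j)) \<and> (\<Union>j\<le>n. U j) = topspace X \<and>
          (\<forall>j\<le>n. homotopic_with (\<lambda>h. True) (subtopology X (U j)) Y f g)}. enat n)"

definition secat :: "'e topology \<Rightarrow> 'b topology \<Rightarrow> ('e \<Rightarrow> 'b) \<Rightarrow> enat" where
  "secat E B p =
     (INF n \<in> {n::nat. \<exists>V::nat \<Rightarrow> 'b set.
          (\<forall>i\<le>n. openin B (V i)) \<and> (\<Union>i\<le>n. V i) = topspace B \<and>
          (\<forall>i\<le>n. \<exists>s. continuous_map (subtopology B (V i)) E s \<and>
                      (\<forall>x\<in>V i. p (s x) = x))}. enat n)"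

definition pullback_path_space ::
  "'a topology \<Rightarrow> 'b topology \<Rightarrow> ('a \<Rightarrow> 'b) \<Rightarrow> ('a \<Rightarrow> 'b) \<Rightarrow> ('a \<times> (real \<Rightarrow> 'b)) topology" where
  "pullback_path_space X Y f g =
     subtopology (prod_topology X (path_space Y))
       {(x, \<gamma>). x \<in> topspace X \<and> \<gamma> \<in> topspace (path_space Y) \<and> \<gamma> 0 = f x \<and> \<gamma> 1 = g x}"

end

theory Submission
  imports Defs
begin

text \<open>A local section of the pull-back fibration over U assigns continuously to each x \<in> U a path
  from f x to g x. Since [0,1] is compact Hausdorff, the exponential law for the compact-open
  topology identifies such continuous families of paths with homotopies from f to g on U. Hence
  the open covers counted by D(f,g) and by secat(q) are the same, and so are the two infima.\<close>

lemma topspace_path_space: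
  "topspace (path_space Y) = {\<gamma>. pathin Y \<gamma> \<and> \<gamma> \<in> extensional {0..1}}"
proof -
  have "{\<gamma>. pathin Y \<gamma> \<and> \<gamma> \<in> extensional {0..1} \<and> \<gamma> ` {} \<subseteq> topspace Y}
     \<in> {{\<gamma>. pathin Y \<gamma> \<and> \<gamma> \<in> extensional {0..1} \<and> \<gamma> ` K \<subseteq> U} | K U.
        compact K \<and> K \<subseteq> {0..1} \<and> openin Y U}"
    by blast
  then show ?thesis
    unfolding path_space_def topology_generated_by_topspace by auto
qed

lemma openin_path_space_image_subset:
  assumes "compact K" "K \<subseteq> {0..1}" "openin Y U"
  shows "openin (path_space Y) {\<gamma>. pathin Y \<gamma> \<and> \<gamma> \<in> extensional {0..1} \<and> \<gamma> ` K \<subseteq> U}"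
  unfolding path_space_def by (rule topology_generated_by_Basis) (use assms in blast)

lemma pathin_image_cball_subset:
  assumes "pathin Y \<gamma>" "openin Y W" "t \<in> {0..1}" "\<gamma> t \<in> W"
  obtains e where "e > 0" "\<gamma> ` ({0..1} \<inter> cball t e) \<subseteq> W"
proof -
  have "openin (top_of_set {0..1}) ({0..1} \<inter> \<gamma> -` W)"
    using assms(1,2) by (auto simp: pathin_def continuous_map_openin_preimage_eq)
  then obtain e where "e > 0" and e: "\<And>s. s \<in> {0..1} \<Longrightarrow> dist s t < e \<Longrightarrow> \<gamma> s \<in> W"
    using assms(3,4) unfolding openin_euclidean_subtopology_iff by blast
  then have "\<gamma> ` ({0..1} \<inter> cball t (e/2)) \<subseteq> W"
    by (auto simp: dist_commute)
  with \<open>e > 0\<close> show thesis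
    using that[of "e/2"] by simp
qed

lemma continuous_map_path_space_uncurry:
  assumes h: "continuous_map Z (path_space Y) h"
  shows "continuous_map (prod_topology (top_of_set {0..1}) Z) Y (\<lambda>(t, z). h z t)"
proof -
  let ?I = "top_of_set {0..1::real}"
  have hz: "pathin Y (h z)" "h z \<in> extensional {0..1}" if "z \<in> topspace Z" for z
    using continuous_map_image_subset_topspace[OF h] that by (auto simp: topspace_path_space)
  have "(\<lambda>(t, z). h z t) \<in> topspace (prod_topology ?I Z) \<rightarrow> topspace Y"
    using hz(1) path_image_subset_topspace by fastforce
  moreover have "\<exists>U. openin (prod_topology ?I Z) U \<and> (t0, z0) \<in> U \<and> (\<forall>p\<in>U. (\<lambda>(t, z). h z t) p \<in> W)"
    if t0: "t0 \<in> {0..1}" and z0: "z0 \<in> topspace Z" and W: "openin Y W" "h z0 t0 \<in> W" for t0 z0 W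
  proof -
    obtain e where "e > 0" and e: "h z0 ` ({0..1} \<inter> cball t0 e) \<subseteq> W"
      using pathin_image_cball_subset[OF hz(1)[OF z0] W(1) t0 W(2)] by blast
    define V where "V = {z \<in> topspace Z.
      h z \<in> {\<gamma>. pathin Y \<gamma> \<and> \<gamma> \<in> extensional {0..1} \<and> \<gamma> ` ({0..1} \<inter> cball t0 e) \<subseteq> W}}"
    have "openin Z V"
      unfolding V_def
      by (rule openin_continuous_map_preimage[OF h openin_path_space_image_subset[OF _ _ W(1)]])
         (auto simp: compact_Int_closed)
    then have "openin (prod_topology ?I Z) (({0..1} \<inter> ball t0 e) \<times> V)"
      by (simp add: openin_prod_Times_iff openin_open_Int)
    moreover have "(t0, z0) \<in> ({0..1} \<inter> ball t0 e) \<times> V"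
      using t0 z0 \<open>e > 0\<close> e hz[OF z0] by (simp add: V_def)
    moreover have "\<forall>p \<in> ({0..1} \<inter> ball t0 e) \<times> V. (\<lambda>(t, z). h z t) p \<in> W"
      by (auto simp: V_def)
    ultimately show ?thesis
      by blast
  qed
  ultimately show ?thesis
    unfolding continuous_map_eq_topcontinuous_at topcontinuous_at_def by fastforce
qed

lemma openin_compact_tube:
  assumes H: "continuous_map (prod_topology A Z) Y H" and K: "compactin A K" and W: "openin Y W"
  shows "openin Z {z \<in> topspace Z. \<forall>t\<in>K. H (t, z) \<in> W}"
proof (subst openin_subopen, intro ballI)
  let ?T = "{z \<in> topspace Z. \<forall>t\<in>K. H (t, z) \<in> W}"
  fix z0 assume z0: "z0 \<in> ?T"
  have preimage: "openin (prod_topology A Z) {p \<in> topspace (prod_topology A Z). H p \<in> W}"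
    using H W by (rule openin_continuous_map_preimage)
  have slice: "K \<times> {z0} \<subseteq> {p \<in> topspace (prod_topology A Z). H p \<in> W}"
    using z0 compactin_subset_topspace[OF K] by auto
  obtain U V where "openin Z V" "z0 \<in> V" "K \<subseteq> U"
    "U \<times> V \<subseteq> {p \<in> topspace (prod_topology A Z). H p \<in> W}"
    using tube_lemma_left[OF preimage K _ slice] z0 by blast
  then have "V \<subseteq> ?T"
    using openin_subset by fastforce
  with \<open>openin Z V\<close> \<open>z0 \<in> V\<close> show "\<exists>V. openin Z V \<and> z0 \<in> V \<and> V \<subseteq> ?T"
    by blast
qed

lemma continuous_map_path_space_curry:
  assumes H: "continuous_map (prod_topology (top_of_set {0..1}) Z) Y H"
  shows "continuous_map Z (path_space Y) (\<lambda>z. restrict (\<lambda>t. H (t, z)) {0..1})"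
proof -
  let ?F = "\<lambda>z. restrict (\<lambda>t. H (t, z)) {0..1}"
  have path: "pathin Y (?F z)" if "z \<in> topspace Z" for z
  proof -
    have "continuous_map (top_of_set {0..1}) Y (\<lambda>t. H (t, z))"
      using continuous_map_compose[OF _ H, of _ "\<lambda>t. (t, z)"] that
      by (simp add: continuous_map_paired o_def)
    then show ?thesis
      unfolding pathin_def by (rule continuous_map_eq) auto
  qed
  show ?thesis
    unfolding path_space_def
  proof (rule continuous_on_generated_topo)
    fix U assume "U \<in> {{\<gamma>. pathin Y \<gamma> \<and> \<gamma> \<in> extensional {0..1} \<and> \<gamma> ` K \<subseteq> W} | K W.
        compact K \<and> K \<subseteq> {0..1} \<and> openin Y W}"
    then obtain K W where U: "U = {\<gamma>. pathin Y \<gamma> \<and> \<gamma> \<in> extensional {0..1} \<and> \<gamma> ` K \<subseteq> W}"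
      and K: "compact K" "K \<subseteq> {0..1}" and W: "openin Y W"
      by blast
    have "?F -` U \<inter> topspace Z = {z \<in> topspace Z. \<forall>t\<in>K. H (t, z) \<in> W}"
      using K(2) path by (force simp: U image_subset_iff)
    moreover have "compactin (top_of_set {0..1}) K"
      using K by (simp add: compactin_subtopology compactin_euclidean_iff)
    ultimately show "openin Z (?F -` U \<inter> topspace Z)"
      using openin_compact_tube[OF H _ W] by simp
  next
    show "?F ` topspace Z \<subseteq> \<Union> {{\<gamma>. pathin Y \<gamma> \<and> \<gamma> \<in> extensional {0..1} \<and> \<gamma> ` K \<subseteq> W} | K W.
        compact K \<and> K \<subseteq> {0..1} \<and> openin Y W}"
      using path topspace_path_space[of Y]
      unfolding path_space_def topology_generated_by_topspace by auto
  qed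
qed

lemma continuous_map_pullback_path_space_iff:
  "continuous_map Z (pullback_path_space X Y f g) s \<longleftrightarrow>
     continuous_map Z X (fst \<circ> s) \<and> continuous_map Z (path_space Y) (snd \<circ> s) \<and>
     (\<forall>z\<in>topspace Z. snd (s z) 0 = f (fst (s z)) \<and> snd (s z) 1 = g (fst (s z)))"
  unfolding pullback_path_space_def continuous_map_in_subtopology continuous_map_pairwise
  using continuous_map_image_subset_topspace[of Z X "fst \<circ> s"]
    continuous_map_image_subset_topspace[of Z "path_space Y" "snd \<circ> s"]
  by (auto simp: image_subset_iff Pi_iff case_prod_unfold)

lemma homotopic_with_iff_pullback_section:
  "homotopic_with (\<lambda>h. True) (subtopology X U) Y f g \<longleftrightarrow>
    (\<exists>s. continuous_map (subtopology X U) (pullback_path_space X Y f g) s \<and> (\<forall>x\<in>U. fst (s x) = x))"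
proof
  assume "homotopic_with (\<lambda>h. True) (subtopology X U) Y f g"
  then obtain H where H: "continuous_map (prod_topology (top_of_set {0..1::real}) (subtopology X U)) Y H"
    and H0: "\<And>x. H (0, x) = f x" and H1: "\<And>x. H (1, x) = g x"
    unfolding homotopic_with_def by blast
  define s where "s x = (x, restrict (\<lambda>t. H (t, x)) {0..1})" for x
  have "continuous_map (subtopology X U) (pullback_path_space X Y f g) s"
    unfolding continuous_map_pullback_path_space_iff
    using continuous_map_path_space_curry[OF H]
    by (simp add: s_def o_def H0 H1 continuous_map_from_subtopology)
  then show "\<exists>s. continuous_map (subtopology X U) (pullback_path_space X Y f g) s \<and> (\<forall>x\<in>U. fst (s x) = x)"
    by (auto simp: s_def)
next
  assume "\<exists>s. continuous_map (subtopology X U) (pullback_path_space X Y f g) s \<and> (\<forall>x\<in>U. fst (s x) = x)"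
  then obtain s where s: "continuous_map (subtopology X U) (pullback_path_space X Y f g) s"
    and fst_s: "\<And>x. x \<in> U \<Longrightarrow> fst (s x) = x"
    by blast
  have paths: "continuous_map (subtopology X U) (path_space Y) (snd \<circ> s)"
    and ends: "\<And>x. x \<in> topspace (subtopology X U) \<Longrightarrow> snd (s x) 0 = f x \<and> snd (s x) 1 = g x"
    using s fst_s unfolding continuous_map_pullback_path_space_iff by auto
  \<comment> \<open>\<open>homotopic_with\<close> prescribes the ends for every x, not only for x in the subspace\<close>
  define G where "G = (\<lambda>(t::real, x). if t = 0 then f x else if t = 1 then g x else snd (s x) t)"
  have "continuous_map (prod_topology (top_of_set {0..1}) (subtopology X U)) Y G"
    using continuous_map_path_space_uncurry[OF paths]
    by (rule continuous_map_eq) (auto simp: G_def ends)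
  then show "homotopic_with (\<lambda>h. True) (subtopology X U) Y f g"
    unfolding homotopic_with_def by (intro exI[of _ G]) (auto simp: G_def)
qed

theorem theorem2p8:
  fixes X :: "'a topology" and Y :: "'b topology" and f g :: "'a \<Rightarrow> 'b"
  assumes "continuous_map X Y f" and "continuous_map X Y g"
  shows "homotopic_distance X Y f g = secat (pullback_path_space X Y f g) X fst"
  unfolding homotopic_distance_def secat_def homotopic_with_iff_pullback_section by simp

end
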